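(* Let $\mathcal{A}$ be a $C^*$-algebra and $V\subseteq\mathcal{A}$ a $\sigma$-subspace such that $a^2\in V$ for every self-adjoint $a\in V$. Then $V$ is norm-closed.
   Context: All $C^*$-algebras are unital. For a bounded increasing sequence $(a_n)$ of self-adjoint elements, $\sup_n a_n$ denotes its supremum in the poset of self-adjoint elements of $\mathcal{A}$, if it exists. A $\sigma$-subspace $V\subseteq\mathcal{A}$ is a linear subspace closed under the involution such that whenever $(a_n)\subseteq V$ is a norm-bounded increasing sequence of self-adjoint elements with supremum $a$ in $\mathcal{A}$, then $a\in V$. *)

theory Defs
  imports "HOL-Analysis.Analysis"
begin

text \<open>A unital C*-algebra: a real Banach algebra with unit (norm 1 = 1) carrying a
complex scalar multiplication sc (compatible with the real one) and an involution st
satisfying the C*-identity.\<close>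

definition cstar_algebra ::
  "(complex \<Rightarrow> 'a::{real_normed_algebra_1,banach} \<Rightarrow> 'a) \<Rightarrow> ('a \<Rightarrow> 'a) \<Rightarrow> bool" where
  "cstar_algebra sc st \<longleftrightarrow>
     (\<forall>a b x. sc (a + b) x = sc a x + sc b x) \<and>
     (\<forall>a x y. sc a (x + y) = sc a x + sc a y) \<and>
     (\<forall>a b x. sc a (sc b x) = sc (a * b) x) \<and>
     (\<forall>r x. sc (complex_of_real r) x = scaleR r x) \<and>
     (\<forall>a x. norm (sc a x) = cmod a * norm x) \<and>
     (\<forall>a x y. sc a x * y = sc a (x * y)) \<and>
     (\<forall>a x y. x * sc a y = sc a (x * y)) \<and>
     (\<forall>x. st (st x) = x) \<and>
     (\<forall>x y. st (x + y) = st x + st y) \<and>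
     (\<forall>a x. st (sc a x) = sc (cnj a) (st x)) \<and>
     (\<forall>x y. st (x * y) = st y * st x) \<and>
     (\<forall>x. norm (st x * x) = (norm x)\<^sup>2)"

definition self_adjoint :: "('a \<Rightarrow> 'a) \<Rightarrow> 'a \<Rightarrow> bool" where
  "self_adjoint st a \<longleftrightarrow> st a = a"

definition cspectrum ::
  "(complex \<Rightarrow> 'a::ring_1 \<Rightarrow> 'a) \<Rightarrow> 'a \<Rightarrow> complex set" where
  "cspectrum sc a = {l. \<not> (\<exists>b. b * (a - sc l 1) = 1 \<and> (a - sc l 1) * b = 1)}"

definition positive_el ::
  "(complex \<Rightarrow> 'a::ring_1 \<Rightarrow> 'a) \<Rightarrow> ('a \<Rightarrow> 'a) \<Rightarrow> 'a \<Rightarrow> bool" where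
  "positive_el sc st a \<longleftrightarrow> self_adjoint st a \<and>
     (\<forall>l\<in>cspectrum sc a. Im l = 0 \<and> Re l \<ge> 0)"

definition sa_le ::
  "(complex \<Rightarrow> 'a::ring_1 \<Rightarrow> 'a) \<Rightarrow> ('a \<Rightarrow> 'a) \<Rightarrow> 'a \<Rightarrow> 'a \<Rightarrow> bool" where
  "sa_le sc st a b \<longleftrightarrow> self_adjoint st a \<and> self_adjoint st b \<and> positive_el sc st (b - a)"

definition is_sa_sup ::
  "(complex \<Rightarrow> 'a::ring_1 \<Rightarrow> 'a) \<Rightarrow> ('a \<Rightarrow> 'a) \<Rightarrow> (nat \<Rightarrow> 'a) \<Rightarrow> 'a \<Rightarrow> bool" where
  "is_sa_sup sc st x s \<longleftrightarrow> self_adjoint st s \<and> (\<forall>n. sa_le sc st (x n) s) \<and>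
     (\<forall>u. self_adjoint st u \<and> (\<forall>n. sa_le sc st (x n) u) \<longrightarrow> sa_le sc st s u)"

definition sigma_subspace ::
  "(complex \<Rightarrow> 'a::{real_normed_algebra_1} \<Rightarrow> 'a) \<Rightarrow> ('a \<Rightarrow> 'a) \<Rightarrow> 'a set \<Rightarrow> bool" where
  "sigma_subspace sc st V \<longleftrightarrow>
     0 \<in> V \<and> (\<forall>x\<in>V. \<forall>y\<in>V. x + y \<in> V) \<and> (\<forall>c. \<forall>x\<in>V. sc c x \<in> V) \<and>
     (\<forall>x\<in>V. st x \<in> V) \<and>
     (\<forall>x s. (\<forall>n. x n \<in> V \<and> self_adjoint st (x n)) \<and>
            (\<forall>n. sa_le sc st (x n) (x (Suc n))) \<and> bounded (range x) \<and>
            is_sa_sup sc st x s \<longrightarrow> s \<in> V)"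

end

(*
  Taking real and imaginary parts, it suffices to show that V contains every self-adjoint h that
  is a limit of self-adjoint g_k in V, say with norm (g_k - h) <= 4^-k.  Every self-adjoint c in V
  splits as c = p - q + r with p, q positive elements of V of norm at most norm c and
  norm r <= norm c / 2: with x = (c / norm c)^2, the elements p, q are squares of self-adjoint
  elements of V whose difference is x c by polarization, and r = (1 - x) c.  Decomposing greedily
  the residuals g_(M+1) - x_M of the approximations x_M writes h - g_0 as a difference of two
  norm-convergent series of positive elements of V.  Their partial sums increase, so their limits
  are suprema and hence lie in V.

  The order-theoretic facts this needs (positivity is preserved by sums and limits, the bounds on
  r) reduce to: the norm of a self-adjoint y is at most its spectral radius.  Instead of Gelfand's
  formula we use the identity
    sum_j w^j (1 - w^j a)^-2 (1 - a^N)^2 = N^2 a^(N-1)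
  over the N-th roots of unity w^j.  If the spectrum of y lies in the disc of radius t < norm y,
  choose r with r t < 1 < r norm y.  The resolvents (1 - mu y)^-1 for |mu| <= r are bounded, and
  the identity yields N norm b <= C (1 + norm b)^2 for b = (s y)^N and 0 <= s <= r.  Hence
  norm ((r y)^N) < 1 for large N, whereas for N = 2^k this norm is (r norm y)^N > 1 by the
  C*-identity.
*)

theory Submission
  imports Defs
begin

section \<open>Invertible elements\<close>

definition invertible_el :: "'a::ring_1 \<Rightarrow> bool" where
  "invertible_el x \<longleftrightarrow> (\<exists>y. y * x = 1 \<and> x * y = 1)"

definition inverse_el :: "'a::ring_1 \<Rightarrow> 'a" where
  "inverse_el x = (SOME y. y * x = 1 \<and> x * y = 1)"

lemma left_inverse_eq_right_inverse:
  fixes x :: "'a::ring_1"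
  assumes "y * x = 1" "x * z = 1"
  shows "y = z"
proof -
  have "y = y * (x * z)" using assms by simp
  also have "\<dots> = (y * x) * z" by (simp add: mult.assoc)
  finally show ?thesis using assms by simp
qed

lemma inverse_el:
  assumes "invertible_el x"
  shows "inverse_el x * x = 1" "x * inverse_el x = 1"
  using someI_ex[OF assms[unfolded invertible_el_def]] unfolding inverse_el_def by auto

lemma invertible_elI:
  fixes x :: "'a::ring_1"
  assumes "y * x = 1" "x * y = 1"
  shows "invertible_el x" and "inverse_el x = y"
proof -
  show inv: "invertible_el x" using assms unfolding invertible_el_def by blast
  show "inverse_el x = y" using left_inverse_eq_right_inverse[OF inverse_el(1)[OF inv] assms(2)] .
qed

lemma invertible_el_1 [simp]: "invertible_el (1::'a::ring_1)"
  by (rule invertible_elI[of 1]) simp_all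

lemma invertible_el_mult:
  fixes x y :: "'a::ring_1"
  assumes "invertible_el x" "invertible_el y"
  shows "invertible_el (x * y)" and "inverse_el (x * y) = inverse_el y * inverse_el x"
proof -
  have "(inverse_el y * inverse_el x) * (x * y) = 1" "(x * y) * (inverse_el y * inverse_el x) = 1"
    using inverse_el[OF assms(1)] inverse_el[OF assms(2)]
    by (simp_all add: mult.assoc flip: mult.assoc[of "inverse_el x"] mult.assoc[of y])
  then show "invertible_el (x * y)" "inverse_el (x * y) = inverse_el y * inverse_el x"
    by (rule invertible_elI)+
qed

lemma invertible_el_minus_iff [simp]: "invertible_el (- x) \<longleftrightarrow> invertible_el (x::'a::ring_1)"
  unfolding invertible_el_def by (metis minus_mult_minus minus_minus)

lemma one_minus_mult_sum_powers:
  fixes x :: "'a::ring_1"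
  shows "(1 - x) * (\<Sum>m<n. x ^ m) = 1 - x ^ n"
proof (induction n)
  case (Suc n)
  have "(1 - x) * (\<Sum>m<Suc n. x ^ m) = (1 - x) * (\<Sum>m<n. x ^ m) + (1 - x) * x ^ n"
    by (simp add: distrib_left)
  also have "\<dots> = 1 - x ^ Suc n"
    using Suc by (simp add: left_diff_distrib)
  finally show ?case .
qed simp

lemma invertible_el_one_minus:
  fixes e :: "'a::{real_normed_algebra_1,banach}"
  assumes "norm e < 1"
  shows "invertible_el (1 - e)" and "norm (inverse_el (1 - e)) \<le> 1 / (1 - norm e)"
proof -
  have norm_summable: "summable (\<lambda>n. norm (e ^ n))"
    by (rule summable_comparison_test[of _ "\<lambda>n. norm e ^ n"]) (auto simp: norm_power_ineq assms)
  have summable: "summable (\<lambda>n. e ^ n)" using summable_norm_cancel[OF norm_summable] .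
  define S where "S = (\<Sum>n. e ^ n)"
  have "S = e * S + 1" "S = S * e + 1"
    using suminf_split_initial_segment[OF summable, of 1] suminf_mult[OF summable, of e]
      suminf_mult2[OF summable, of e]
    by (simp_all add: S_def power_commutes)
  then have "S * (1 - e) = 1" "(1 - e) * S = 1"
    by (simp_all add: algebra_simps)
  note inv = invertible_elI[OF this]
  show "invertible_el (1 - e)" by (fact inv)
  have "norm S \<le> (\<Sum>n. norm (e ^ n))"
    unfolding S_def by (rule summable_norm[OF norm_summable])
  also have "\<dots> \<le> (\<Sum>n. norm e ^ n)"
    by (rule suminf_le) (auto simp: norm_power_ineq norm_summable assms)
  also have "\<dots> = 1 / (1 - norm e)" using suminf_geometric[of "norm e"] assms by simp
  finally show "norm (inverse_el (1 - e)) \<le> 1 / (1 - norm e)" using inv by simp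
qed

lemma norm_inverse_el_add_diff_le:
  fixes x h :: "'a::{real_normed_algebra_1,banach}"
  assumes inv: "invertible_el x" and small: "norm h * norm (inverse_el x) \<le> 1/2"
  shows "norm (inverse_el (x + h) - inverse_el x) \<le> 2 * norm (inverse_el x) ^ 2 * norm h"
proof -
  define e where "e = - (inverse_el x * h)"
  have norm_e: "norm e \<le> 1/2"
    unfolding e_def using norm_mult_ineq[of "inverse_el x" h] small by (simp add: mult.commute)
  have "x + h = x * (1 - e)"
    unfolding e_def by (simp add: distrib_left inverse_el(2)[OF inv] flip: mult.assoc)
  moreover note inv_e = invertible_el_one_minus[of e]
  ultimately have inv_xh: "invertible_el (x + h)"
    and inverse_xh: "inverse_el (x + h) = inverse_el (1 - e) * inverse_el x"
    using invertible_el_mult[OF inv] norm_e by simp_all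
  have "norm (inverse_el (1 - e)) \<le> 2"
  proof -
    have "1 / (1 - norm e) \<le> 2" using norm_e by (simp add: field_simps)
    moreover have "norm e < 1" using norm_e by simp
    ultimately show ?thesis using inv_e(2) by linarith
  qed
  then have norm_xh: "norm (inverse_el (x + h)) \<le> 2 * norm (inverse_el x)"
    unfolding inverse_xh by (rule order_trans[OF norm_mult_ineq mult_right_mono]) simp
  have "inverse_el (x + h) - inverse_el x
      = inverse_el (x + h) * (x * inverse_el x) - (inverse_el (x + h) * (x + h)) * inverse_el x"
    using inverse_el[OF inv] inverse_el[OF inv_xh] by simp
  also have "\<dots> = - (inverse_el (x + h) * h * inverse_el x)"
    by (simp add: algebra_simps)
  finally have "inverse_el (x + h) - inverse_el x = - (inverse_el (x + h) * h * inverse_el x)" .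
  then have "norm (inverse_el (x + h) - inverse_el x)
      \<le> norm (inverse_el (x + h) * h) * norm (inverse_el x)"
    by (simp add: norm_mult_ineq)
  also have "\<dots> \<le> norm (inverse_el (x + h)) * norm h * norm (inverse_el x)"
    by (intro mult_right_mono norm_mult_ineq norm_ge_zero)
  also have "\<dots> \<le> (2 * norm (inverse_el x)) * norm h * norm (inverse_el x)"
    using norm_xh by (intro mult_right_mono) auto
  finally show ?thesis by (simp add: power2_eq_square mult_ac)
qed

lemma continuous_on_inverse_el:
  "continuous_on {x::'a::{real_normed_algebra_1,banach}. invertible_el x} inverse_el"
  unfolding continuous_on_def
proof (intro ballI)
  fix x :: 'a
  assume "x \<in> {x. invertible_el x}"
  then have inv: "invertible_el x" by simp
  define F where "F = at x within {x::'a. invertible_el x}"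
  define c where "c = 2 * norm (inverse_el x) ^ 2"
  have dist_0: "((\<lambda>y. norm (y - x)) \<longlongrightarrow> 0) F"
    unfolding F_def by (intro tendsto_norm_zero LIM_zero tendsto_ident_at)
  have "eventually (\<lambda>y. norm (y - x) * norm (inverse_el x) < 1/2) F"
    using order_tendstoD(2)[OF tendsto_mult_left_zero[OF dist_0, of "norm (inverse_el x)"], of "1/2"]
    by simp
  then have "eventually (\<lambda>y. norm (inverse_el y - inverse_el x) \<le> c * norm (y - x)) F"
  proof eventually_elim
    case (elim y)
    then show ?case using norm_inverse_el_add_diff_le[OF inv, of "y - x"] by (simp add: c_def)
  qed
  from Lim_null_comparison[OF this tendsto_mult_right_zero[OF dist_0]]
  show "(inverse_el \<longlongrightarrow> inverse_el x) F"
    by (rule LIM_zero_cancel)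
qed

lemma cis_power_eq_1_iff:
  assumes "N > 0"
  shows "cis (2 * pi / real N) ^ k = 1 \<longleftrightarrow> N dvd k"
proof -
  have "cis (2 * pi / real N) ^ k = exp (2 * complex_of_real pi * \<i> * of_nat k / of_nat N)"
    by (simp add: cis_conv_exp field_simps flip: exp_of_nat_mult)
  then show ?thesis
    using complex_root_unity_eq_1[of N k] assms by simp
qed

lemma sum_powers_root_of_unity:
  assumes "N > 0"
  shows "(\<Sum>j<N. (cis (2 * pi / real N) ^ k) ^ j) = (if N dvd k then of_nat N else 0)"
proof -
  define z where "z = cis (2 * pi / real N) ^ k"
  have "z ^ N = 1"
    using cis_power_eq_1_iff[OF assms, of "k * N"] by (simp add: z_def power_mult)
  moreover have "z = 1 \<longleftrightarrow> N dvd k"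
    unfolding z_def by (rule cis_power_eq_1_iff[OF assms])
  ultimately show ?thesis
    using geometric_sum[of z N] by (cases "N dvd k") (simp_all flip: z_def)
qed

lemma dvd_Suc_add_iff:
  fixes N m m' :: nat
  assumes "m < N" and "m' < N"
  shows "N dvd Suc (m + m') \<longleftrightarrow> m + m' = N - 1"
proof
  assume "N dvd Suc (m + m')"
  then obtain q where q: "Suc (m + m') = N * q" by (rule dvdE)
  moreover have "q \<noteq> 0" using q by (cases q) auto
  moreover have "N * q < N * 2" using q assms by linarith
  ultimately have "q = 1" by simp
  with q show "m + m' = N - 1" by simp
qed (use assms in auto)

lemma power_lt_1_if_quadratic_bound:
  fixes r \<beta> C :: real
  assumes "N > 0" and "r > 0" and "\<beta> \<ge> 0" and "4 * C < real N"
    and bound: "\<And>s. 0 \<le> s \<Longrightarrow> s \<le> r \<Longrightarrow> real N * (s ^ N * \<beta>) \<le> C * (1 + s ^ N * \<beta>)\<^sup>2"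
  shows "r ^ N * \<beta> < 1"
proof (rule ccontr)
  assume "\<not> r ^ N * \<beta> < 1"
  then have \<beta>: "\<beta> > 0" and big: "1 \<le> r ^ N * \<beta>"
    using assms(3) by (auto simp: less_le)
  define s where "s = root N (1 / \<beta>)"
  have s_N: "s ^ N * \<beta> = 1"
    unfolding s_def using assms(1) \<beta> by (simp add: real_root_pow_pos2)
  have "\<beta> * s ^ N \<le> \<beta> * r ^ N"
    using s_N big by (simp add: mult.commute)
  then have "s ^ N \<le> r ^ N"
    using \<beta> by (simp add: mult_le_cancel_left_pos)
  then have "s \<le> r"
    using power_mono_iff[of s r N] assms(1,2) \<beta> by (simp add: s_def)
  moreover have "0 \<le> s"
    unfolding s_def using \<beta> by (simp add: real_root_ge_zero)
  ultimately have "real N \<le> C * 4"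
    using bound[of s] s_N by simp
  with assms(4) show False by simp
qed

lemma halving_approximation_error:
  fixes g x :: "nat \<Rightarrow> 'b::real_normed_vector"
  assumes g: "\<And>k. norm (g k - h) \<le> (1/4) ^ k" and x0: "x 0 = g 0"
    and halving: "\<And>M. norm (g (Suc M) - x (Suc M)) \<le> norm (g (Suc M) - x M) / 2"
  shows "norm (x M - h) \<le> 3 * (3/4) ^ M"
proof (induction M)
  case 0
  show ?case using g[of 0] x0 by simp
next
  case (Suc M)
  have "norm (x (Suc M) - h) \<le> norm (g (Suc M) - h) + norm (g (Suc M) - x (Suc M))"
    using norm_triangle_ineq4[of "g (Suc M) - h" "g (Suc M) - x (Suc M)"] by simp
  moreover have "norm (g (Suc M) - x M) \<le> norm (g (Suc M) - h) + norm (x M - h)"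
    using norm_triangle_ineq4[of "g (Suc M) - h" "x M - h"] by simp
  ultimately have "norm (x (Suc M) - h) \<le> (1/4) ^ Suc M + (norm (g (Suc M) - h) + norm (x M - h)) / 2"
    using g[of "Suc M"] halving[of M] by argo
  also have "\<dots> \<le> (3/2) * (1/4) ^ Suc M + (3/2) * (3/4) ^ M"
    using g[of "Suc M"] Suc.IH by argo
  also have "\<dots> \<le> 3 * (3/4) ^ Suc M"
    using power_mono[of "1/4" "3/4::real" M] zero_le_power[of "3/4::real" M]
    unfolding power_Suc by linarith
  finally show ?case .
qed

lemma halving_approximation:
  fixes g x :: "nat \<Rightarrow> 'b::real_normed_vector"
  assumes g: "\<And>k. norm (g k - h) \<le> (1/4) ^ k" and "x 0 = g 0"
    and "\<And>M. norm (g (Suc M) - x (Suc M)) \<le> norm (g (Suc M) - x M) / 2"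
  shows "x \<longlonglongrightarrow> h" and "norm (g (Suc M) - x M) \<le> 4 * (3/4) ^ M"
proof -
  note error = halving_approximation_error[where g = g and x = x, OF assms]
  have "eventually (\<lambda>M. norm (x M - h) \<le> 3 * (3/4) ^ M) sequentially"
    by (intro always_eventually allI error)
  moreover have "(\<lambda>M. 3 * (3/4::real) ^ M) \<longlonglongrightarrow> 0"
    by (rule tendsto_mult_right_zero[OF LIMSEQ_power_zero]) simp
  ultimately show "x \<longlonglongrightarrow> h"
    by (rule LIM_zero_cancel[OF Lim_null_comparison])
  have "norm (g (Suc M) - x M) \<le> norm (g (Suc M) - h) + norm (x M - h)"
    using norm_triangle_ineq4[of "g (Suc M) - h" "x M - h"] by simp
  also have "\<dots> \<le> (3/4) ^ M + 3 * (3/4) ^ M"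
    using g[of "Suc M"] error[of M] power_mono[of "1/4" "3/4::real" M] zero_le_power[of "1/4::real" M]
    by (simp only: power_Suc) linarith
  finally show "norm (g (Suc M) - x M) \<le> 4 * (3/4) ^ M" by simp
qed

section \<open>Scalars and involution in a C*-algebra\<close>

locale cstar =
  fixes sc :: "complex \<Rightarrow> 'a::{real_normed_algebra_1,banach} \<Rightarrow> 'a" and st :: "'a \<Rightarrow> 'a"
  assumes cstar_algebra: "cstar_algebra sc st"
begin

lemma sc_add_left: "sc (a + b) x = sc a x + sc b x"
  and sc_sc: "sc a (sc b x) = sc (a * b) x"
  and sc_of_real: "sc (complex_of_real r) x = r *\<^sub>R x"
  and norm_sc: "norm (sc a x) = cmod a * norm x"
  and sc_mult_left: "sc a x * y = sc a (x * y)"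
  and sc_mult_right: "x * sc a y = sc a (x * y)"
  and st_st [simp]: "st (st x) = x"
  and st_add: "st (x + y) = st x + st y"
  and st_sc: "st (sc a x) = sc (cnj a) (st x)"
  and st_mult: "st (x * y) = st y * st x"
  and norm_st_mult_self: "norm (st x * x) = (norm x)\<^sup>2"
  using cstar_algebra unfolding cstar_algebra_def by auto

definition of_complex :: "complex \<Rightarrow> 'a" where
  "of_complex c = sc c 1"

lemma sc_eq_of_complex_mult: "sc c x = of_complex c * x"
  unfolding of_complex_def using sc_mult_left[of c 1 x] by simp

lemma of_complex_commute: "of_complex c * x = x * of_complex c"
  unfolding of_complex_def using sc_mult_right[of x c 1] sc_mult_left[of c 1 x] by simp

lemma of_complex_mult: "of_complex (a * b) = of_complex a * of_complex b"
  unfolding of_complex_def using sc_sc[of a b 1] sc_mult_left[of a 1 "sc b 1"] by simp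

lemma of_complex_add: "of_complex (a + b) = of_complex a + of_complex b"
  unfolding of_complex_def by (rule sc_add_left)

lemma of_complex_of_real [simp]: "of_complex (complex_of_real r) = of_real r"
  unfolding of_complex_def using sc_of_real[of r 1] by (simp add: of_real_def)

lemma of_complex_of_nat [simp]: "of_complex (of_nat n) = of_nat n"
  using of_complex_of_real[of "real n"] by simp

lemma of_complex_0 [simp]: "of_complex 0 = 0"
  and of_complex_1 [simp]: "of_complex 1 = 1"
  using of_complex_of_real[of 0] of_complex_of_real[of 1] by simp_all

lemma of_complex_minus: "of_complex (- a) = - of_complex a"
  using add.inverse_unique[of "of_complex a" "of_complex (- a)"] of_complex_add[of a "- a"] by simp

lemma of_complex_diff: "of_complex (a - b) = of_complex a - of_complex b"
  using of_complex_add[of a "- b"] by (simp add: of_complex_minus)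

lemma of_complex_sum: "of_complex (sum f A) = (\<Sum>i\<in>A. of_complex (f i))"
  by (induction A rule: infinite_finite_induct) (simp_all add: of_complex_add)

lemma norm_of_complex_mult: "norm (of_complex c * x) = cmod c * norm x"
  using norm_sc[of c x] by (simp add: sc_eq_of_complex_mult)

lemma norm_of_complex [simp]: "norm (of_complex c) = cmod c"
  using norm_of_complex_mult[of c 1] by simp

lemma norm_of_nat_mult:
  fixes x :: 'a
  shows "norm (of_nat n * x) = real n * norm x"
proof -
  have "of_nat n * x = of_real (real n) * x" by simp
  also have "\<dots> = real n *\<^sub>R x" by (rule scaleR_conv_of_real[symmetric])
  finally show ?thesis by simp
qed

lemma of_complex_left_commute: "x * (of_complex c * y) = of_complex c * (x * y)"
  by (metis mult.assoc of_complex_commute)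

lemma of_complex_mult_power: "(of_complex c * x) ^ n = of_complex (c ^ n) * x ^ n"
proof (induction n)
  case (Suc n)
  have "(of_complex c * x) ^ Suc n = of_complex c * (of_complex (c ^ n) * (x * x ^ n))"
    by (simp add: Suc mult.assoc of_complex_left_commute[of x])
  then show ?case
    by (simp add: of_complex_mult mult.assoc)
qed simp

lemma invertible_el_of_complex:
  assumes "c \<noteq> 0"
  shows "invertible_el (of_complex c)"
  using assms invertible_elI[of "of_complex (inverse c)" "of_complex c"]
  by (simp flip: of_complex_mult)

lemma bounded_linear_of_complex: "bounded_linear of_complex"
proof
  show "of_complex (r *\<^sub>R c) = r *\<^sub>R of_complex c" for r c
    by (simp add: scaleR_conv_of_real of_complex_mult)
  show "\<exists>K. \<forall>c. norm (of_complex c) \<le> norm c * K"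
    by (intro exI[of _ 1]) simp
qed (rule of_complex_add)

lemma st_0 [simp]: "st 0 = 0"
  using st_add[of 0 0] by simp

lemma st_minus: "st (- x) = - st x"
  using add.inverse_unique[of "st x" "st (- x)"] st_add[of x "- x"] by simp

lemma st_diff: "st (x - y) = st x - st y"
  using st_add[of x "- y"] by (simp add: st_minus)

lemma st_1 [simp]: "st 1 = 1"
  using st_mult[of "st 1" 1] by simp

lemma st_of_complex: "st (of_complex c) = of_complex (cnj c)"
  using st_sc[of c 1] by (simp add: of_complex_def)

lemma st_of_complex_mult: "st (of_complex c * x) = of_complex (cnj c) * st x"
  by (simp add: st_mult st_of_complex of_complex_commute)

lemma st_scaleR: "st (r *\<^sub>R x) = r *\<^sub>R st x"
  using st_of_complex_mult[of "complex_of_real r" x] by (simp add: scaleR_conv_of_real)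

lemma norm_st: "norm (st x) = norm x"
proof -
  have "norm y \<le> norm (st y)" for y
  proof (cases "y = 0")
    case False
    then show ?thesis
      using norm_st_mult_self[of y] norm_mult_ineq[of "st y" y] by (simp add: power2_eq_square)
  qed simp
  from this[of x] this[of "st x"] show ?thesis by simp
qed

lemma tendsto_st:
  assumes "(f \<longlongrightarrow> l) F"
  shows "((\<lambda>n. st (f n)) \<longlongrightarrow> st l) F"
proof -
  have "norm (st (f n) - st l) = norm (f n - l)" for n
    by (metis norm_st st_diff)
  then have "((\<lambda>n. norm (st (f n) - st l)) \<longlongrightarrow> 0) F"
    using tendsto_norm_zero[OF LIM_zero[OF assms]] by simp
  then show ?thesis
    by (rule LIM_zero_cancel[OF tendsto_norm_zero_cancel])
qed

abbreviation sa :: "'a \<Rightarrow> bool" where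
  "sa x \<equiv> self_adjoint st x"

lemma sa_add: "sa x \<Longrightarrow> sa y \<Longrightarrow> sa (x + y)"
  unfolding self_adjoint_def by (simp add: st_add)

lemma sa_diff: "sa x \<Longrightarrow> sa y \<Longrightarrow> sa (x - y)"
  unfolding self_adjoint_def by (simp add: st_diff)

lemma sa_scaleR: "sa x \<Longrightarrow> sa (r *\<^sub>R x)"
  unfolding self_adjoint_def by (simp add: st_scaleR)

lemma sa_mult_self: "sa x \<Longrightarrow> sa (x * x)"
  unfolding self_adjoint_def by (simp add: st_mult)

lemma sa_of_real_diff: "sa (of_real t - x) \<longleftrightarrow> sa x"
proof -
  have "st (of_real t) = of_real t"
    using st_of_complex[of "complex_of_real t"] by simp
  then show ?thesis
    unfolding self_adjoint_def by (auto simp: st_diff)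
qed

lemma sa_0: "sa 0"
  by (simp add: self_adjoint_def)

lemma sa_sum: "(\<And>i. i \<in> A \<Longrightarrow> sa (f i)) \<Longrightarrow> sa (sum f A)"
  by (induction A rule: infinite_finite_induct) (simp_all add: sa_0 sa_add)

lemma sa_limit:
  assumes "\<And>n. sa (f n)" and "f \<longlonglongrightarrow> l"
  shows "sa l"
proof -
  have "f \<longlonglongrightarrow> st l"
    using tendsto_st[OF assms(2)] assms(1) unfolding self_adjoint_def by simp
  then show ?thesis
    unfolding self_adjoint_def using assms(2) LIMSEQ_unique by blast
qed

lemma norm_sa_mult_self: "sa x \<Longrightarrow> norm (x * x) = (norm x)\<^sup>2"
  using norm_st_mult_self[of x] unfolding self_adjoint_def by simp

lemma norm_sa_power_two_power: "sa x \<Longrightarrow> norm (x ^ (2 ^ k)) = norm x ^ (2 ^ k)"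
proof (induction k)
  case (Suc k)
  have "st (x ^ n) = st x ^ n" for n
    by (induction n) (simp_all add: st_mult power_commutes)
  then have "sa (x ^ (2 ^ k))"
    using Suc.prems unfolding self_adjoint_def by simp
  moreover have "x ^ (2 ^ Suc k) = x ^ (2 ^ k) * x ^ (2 ^ k)"
    by (simp add: mult_2 flip: power_add)
  ultimately show ?case
    using norm_sa_mult_self[of "x ^ (2 ^ k)"] Suc.IH[OF Suc.prems]
    by (simp add: mult.commute power_Suc2 flip: power_mult)
qed simp

lemma mem_cspectrum_iff: "l \<in> cspectrum sc x \<longleftrightarrow> \<not> invertible_el (x - of_complex l)"
  unfolding cspectrum_def invertible_el_def of_complex_def by auto

lemma invertible_el_one_minus_of_complex_mult:
  assumes "cmod \<mu> * norm x < 1"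
  shows "invertible_el (1 - of_complex \<mu> * x)"
  using invertible_el_one_minus(1)[of "of_complex \<mu> * x"] assms by (simp add: norm_of_complex_mult)

lemma norm_le_if_mem_cspectrum:
  assumes "l \<in> cspectrum sc x"
  shows "cmod l \<le> norm x"
proof (rule ccontr)
  assume "\<not> cmod l \<le> norm x"
  then have big: "norm x < cmod l" by simp
  then have l: "l \<noteq> 0" by auto
  have small: "cmod (inverse l) * norm x < 1"
    using big l by (simp add: norm_divide field_simps)
  have "x - of_complex l = of_complex (- l) * (1 - of_complex (inverse l) * x)"
    using l by (simp add: right_diff_distrib of_complex_minus flip: mult.assoc of_complex_mult)
  then have "invertible_el (x - of_complex l)"
    using invertible_el_mult(1)[OF invertible_el_of_complex
        invertible_el_one_minus_of_complex_mult[OF small]] l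
    by simp
  with assms show False by (simp add: mem_cspectrum_iff)
qed

lemma norm_sa_add_i_scalar_le:
  assumes "sa x"
  shows "(norm (x + of_complex (\<i> * of_real t)))\<^sup>2 \<le> (norm x)\<^sup>2 + t\<^sup>2"
proof -
  define s where "s = of_complex (\<i> * of_real t)"
  have "st s = - s"
    unfolding s_def by (simp add: st_of_complex of_complex_minus)
  moreover have "s * s = - of_real (t\<^sup>2)"
  proof -
    have "\<i> * of_real t * (\<i> * of_real t) = - complex_of_real (t\<^sup>2)"
      by (simp add: power2_eq_square mult.assoc mult.left_commute)
    then show ?thesis
      unfolding s_def by (simp only: of_complex_minus of_complex_of_real flip: of_complex_mult)
  qed
  ultimately have "st (x + s) * (x + s) = x * x + of_real (t\<^sup>2)"
    using assms of_complex_commute[of "\<i> * of_real t" x]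
    by (simp add: self_adjoint_def st_add algebra_simps s_def)
  then have "(norm (x + s))\<^sup>2 = norm (x * x + of_real (t\<^sup>2))"
    by (metis norm_st_mult_self)
  also have "\<dots> \<le> norm (x * x) + t\<^sup>2"
    using norm_triangle_ineq[of "x * x" "of_real (t\<^sup>2)"] by (simp del: of_real_power)
  finally show ?thesis
    unfolding s_def using norm_sa_mult_self[OF assms] by simp
qed

lemma Im_eq_0_if_mem_cspectrum_sa:
  assumes "sa x" and "l \<in> cspectrum sc x"
  shows "Im l = 0"
proof (rule ccontr)
  assume Im_l: "Im l \<noteq> 0"
  define t where "t = ((norm x)\<^sup>2 + 1) / (2 * Im l)"
  have "l + \<i> * of_real t \<in> cspectrum sc (x + of_complex (\<i> * of_real t))"
    using assms(2) by (simp add: mem_cspectrum_iff of_complex_add)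
  then have "cmod (l + \<i> * of_real t) \<le> norm (x + of_complex (\<i> * of_real t))"
    by (rule norm_le_if_mem_cspectrum)
  then have "(cmod (l + \<i> * of_real t))\<^sup>2 \<le> (norm x)\<^sup>2 + t\<^sup>2"
    using norm_sa_add_i_scalar_le[OF assms(1), of t] power_mono[of _ _ 2] norm_ge_zero
    by (meson order_trans)
  moreover have "(cmod (l + \<i> * of_real t))\<^sup>2 = (Re l)\<^sup>2 + (Im l + t)\<^sup>2"
    by (simp add: cmod_power2)
  ultimately have "(Re l)\<^sup>2 + (Im l)\<^sup>2 + 2 * Im l * t \<le> (norm x)\<^sup>2"
    by (simp add: power2_eq_square algebra_simps)
  moreover have "2 * Im l * t = (norm x)\<^sup>2 + 1"
    using Im_l by (simp add: t_def)
  ultimately show False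
    using zero_le_power2[of "Re l"] zero_le_power2[of "Im l"] by linarith
qed

lemma invertible_el_quadratic:
  assumes "invertible_el (x - of_complex \<alpha>)" and "invertible_el (x - of_complex \<beta>)"
  shows "invertible_el (x * x - of_complex (\<alpha> + \<beta>) * x + of_complex (\<alpha> * \<beta>))"
proof -
  have "(x - of_complex \<alpha>) * (x - of_complex \<beta>)
      = x * x - of_complex (\<alpha> + \<beta>) * x + of_complex (\<alpha> * \<beta>)"
    by (simp add: algebra_simps of_complex_add of_complex_mult of_complex_commute[of _ x])
  then show ?thesis
    using invertible_el_mult(1)[OF assms] by simp
qed

lemma cspectrum_sa_mult_self_nonneg:
  assumes "sa x" and "l \<in> cspectrum sc (x * x)"
  shows "Im l = 0 \<and> 0 \<le> Re l"
proof (rule ccontr)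
  assume not_nonneg: "\<not> (Im l = 0 \<and> 0 \<le> Re l)"
  define m where "m = csqrt l"
  have mm: "m * m = l"
    unfolding m_def by (simp flip: power2_eq_square)
  have "Im m \<noteq> 0"
  proof
    assume "Im m = 0"
    then have "l = complex_of_real ((Re m)\<^sup>2)"
      using mm by (simp add: complex_eq_iff power2_eq_square)
    with not_nonneg show False by simp
  qed
  then have "invertible_el (x - of_complex m)" "invertible_el (x - of_complex (- m))"
    using Im_eq_0_if_mem_cspectrum_sa[OF assms(1), of m]
      Im_eq_0_if_mem_cspectrum_sa[OF assms(1), of "- m"]
    by (auto simp: mem_cspectrum_iff)
  from invertible_el_quadratic[OF this] have "invertible_el (x * x - of_complex l)"
    by (simp add: mm of_complex_minus)
  with assms(2) show False by (simp add: mem_cspectrum_iff)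
qed

subsection \<open>Norm and spectrum of self-adjoint elements\<close>

lemma of_complex_geometric_square:
  "of_complex z * (\<Sum>m<N. of_complex (z ^ m) * a ^ m) * (\<Sum>m<N. of_complex (z ^ m) * a ^ m)
    = (\<Sum>m<N. \<Sum>m'<N. of_complex (z ^ Suc (m + m')) * a ^ (m + m'))"
proof -
  have product: "(of_complex (z ^ m) * a ^ m) * (of_complex (z ^ m') * a ^ m')
      = of_complex (z ^ m * z ^ m') * a ^ (m + m')" for m m'
    by (simp add: mult.assoc of_complex_left_commute[of "a ^ m"] of_complex_mult power_add)
  have scalar: "of_complex z * (of_complex (z ^ m * z ^ m') * a ^ (m + m'))
      = of_complex (z ^ Suc (m + m')) * a ^ (m + m')" for m m'
    by (simp add: power_add flip: mult.assoc of_complex_mult)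
  have "of_complex z * (\<Sum>m<N. of_complex (z ^ m) * a ^ m) * (\<Sum>m<N. of_complex (z ^ m) * a ^ m)
      = of_complex z * (\<Sum>m<N. \<Sum>m'<N. of_complex (z ^ m * z ^ m') * a ^ (m + m'))"
    by (simp only: mult.assoc[of "of_complex z"] sum_product product)
  also have "\<dots> = (\<Sum>m<N. \<Sum>m'<N. of_complex (z ^ Suc (m + m')) * a ^ (m + m'))"
    by (simp only: sum_distrib_left scalar)
  finally show ?thesis .
qed

lemma sum_roots_of_unity_geometric_square:
  assumes N: "N > 0"
  defines "\<omega> \<equiv> cis (2 * pi / real N)"
  shows "(\<Sum>j<N. \<Sum>m<N. \<Sum>m'<N. of_complex ((\<omega> ^ j) ^ Suc (m + m')) * a ^ (m + m'))
    = of_nat (N * N) * a ^ (N - 1)"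
proof -
  have "(\<omega> ^ j) ^ Suc (m + m') = (\<omega> ^ Suc (m + m')) ^ j" for j m m'
    unfolding power_mult[symmetric] by (simp add: mult.commute)
  then have regroup: "(\<Sum>m<N. \<Sum>m'<N. \<Sum>j<N. of_complex ((\<omega> ^ j) ^ Suc (m + m')) * a ^ (m + m'))
      = (\<Sum>m<N. \<Sum>m'<N. of_complex (\<Sum>j<N. (\<omega> ^ Suc (m + m')) ^ j) * a ^ (m + m'))"
    by (simp only: of_complex_sum sum_distrib_right)
  have swap: "(\<Sum>j<N. \<Sum>m<N. \<Sum>m'<N. f j m m') = (\<Sum>m<N. \<Sum>m'<N. \<Sum>j<N. f j m m')"
    for f :: "nat \<Rightarrow> nat \<Rightarrow> nat \<Rightarrow> 'a"
    by (subst sum.swap) (intro sum.cong refl sum.swap)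
  from swap regroup have "(\<Sum>j<N. \<Sum>m<N. \<Sum>m'<N. of_complex ((\<omega> ^ j) ^ Suc (m + m')) * a ^ (m + m'))
      = (\<Sum>m<N. \<Sum>m'<N. of_complex (\<Sum>j<N. (\<omega> ^ Suc (m + m')) ^ j) * a ^ (m + m'))"
    by (rule trans)
  also have "\<dots> = (\<Sum>m<N. \<Sum>m'<N. if m' = N - 1 - m then of_nat N * a ^ (N - 1) else 0)"
    unfolding \<omega>_def sum_powers_root_of_unity[OF N]
    by (intro sum.cong refl) (auto simp: dvd_Suc_add_iff)
  also have "\<dots> = (\<Sum>m<N. of_nat N * a ^ (N - 1))"
    by (intro sum.cong refl) auto
  finally show ?thesis
    by (simp add: mult.assoc)
qed

lemma inverse_el_one_minus_mult_one_minus_power: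
  assumes inv: "invertible_el (1 - of_complex z * a)" and z: "z ^ N = 1"
  shows "inverse_el (1 - of_complex z * a) * (1 - a ^ N) = (\<Sum>m<N. of_complex (z ^ m) * a ^ m)"
proof -
  have "(1 - of_complex z * a) * (\<Sum>m<N. of_complex (z ^ m) * a ^ m) = 1 - a ^ N"
    using one_minus_mult_sum_powers[of "of_complex z * a" N] z by (simp add: of_complex_mult_power)
  then have "inverse_el (1 - of_complex z * a) * (1 - a ^ N)
      = (inverse_el (1 - of_complex z * a) * (1 - of_complex z * a)) * (\<Sum>m<N. of_complex (z ^ m) * a ^ m)"
    by (simp add: mult.assoc)
  then show ?thesis
    using inverse_el(1)[OF inv] by simp
qed

lemma resolvent_square_sum:
  fixes a :: 'a
  assumes N: "N > 0"
  defines "\<omega> \<equiv> cis (2 * pi / real N)"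
  assumes inv: "\<And>j. j < N \<Longrightarrow> invertible_el (1 - of_complex (\<omega> ^ j) * a)"
  shows "(\<Sum>j<N. of_complex (\<omega> ^ j) * inverse_el (1 - of_complex (\<omega> ^ j) * a)
            * inverse_el (1 - of_complex (\<omega> ^ j) * a)) * (1 - a ^ N) * (1 - a ^ N)
    = of_nat (N * N) * a ^ (N - 1)"
proof -
  define w where "w = 1 - a ^ N"
  define P where "P z = (\<Sum>m<N. of_complex (z ^ m) * a ^ m)" for z
  define R where "R j = inverse_el (1 - of_complex (\<omega> ^ j) * a)" for j
  have RP: "R j * w = P (\<omega> ^ j)" if "j < N" for j
  proof -
    have "(\<omega> ^ j) ^ N = 1"
      using cis_power_eq_1_iff[OF N, of "j * N"] by (simp add: \<omega>_def power_mult)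
    then show ?thesis
      unfolding R_def P_def w_def by (rule inverse_el_one_minus_mult_one_minus_power[OF inv[OF that]])
  qed
  have Pw: "P z * w = w * P z" for z
  proof -
    have "(of_complex c * a ^ m) * a ^ N = a ^ N * (of_complex c * a ^ m)" for c m
      by (simp add: mult.assoc of_complex_left_commute[of "a ^ N"] add.commute flip: power_add)
    then have "P z * a ^ N = a ^ N * P z"
      unfolding P_def by (simp add: sum_distrib_left sum_distrib_right)
    then show ?thesis
      unfolding w_def by (simp add: left_diff_distrib right_diff_distrib)
  qed
  have "of_complex (\<omega> ^ j) * R j * R j * w * w = of_complex (\<omega> ^ j) * P (\<omega> ^ j) * P (\<omega> ^ j)"
    if "j < N" for j
    by (simp add: mult.assoc RP[OF that] Pw flip: mult.assoc[of "R j"])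
  then have "(\<Sum>j<N. of_complex (\<omega> ^ j) * R j * R j) * w * w
      = (\<Sum>j<N. of_complex (\<omega> ^ j) * P (\<omega> ^ j) * P (\<omega> ^ j))"
    by (simp add: sum_distrib_right)
  also have "\<dots> = of_nat (N * N) * a ^ (N - 1)"
    unfolding P_def of_complex_geometric_square \<omega>_def
    by (rule sum_roots_of_unity_geometric_square[OF N])
  finally show ?thesis
    unfolding R_def w_def .
qed

lemma continuous_on_resolvent:
  assumes "\<And>\<mu>. \<mu> \<in> S \<Longrightarrow> invertible_el (1 - of_complex \<mu> * y)"
  shows "continuous_on S (\<lambda>\<mu>. inverse_el (1 - of_complex \<mu> * y))"
proof (rule continuous_on_compose2[OF continuous_on_inverse_el])
  show "continuous_on S (\<lambda>\<mu>. 1 - of_complex \<mu> * y)"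
    by (intro continuous_on_diff continuous_on_const continuous_on_mult_right
        linear_continuous_on bounded_linear_of_complex)
qed (use assms in auto)

lemma resolvent_norm_bounded:
  assumes "\<And>\<mu>. cmod \<mu> \<le> r \<Longrightarrow> invertible_el (1 - of_complex \<mu> * y)"
  obtains M where "\<And>\<mu>. cmod \<mu> \<le> r \<Longrightarrow> norm (inverse_el (1 - of_complex \<mu> * y)) \<le> M"
proof -
  have "compact ((\<lambda>\<mu>. inverse_el (1 - of_complex \<mu> * y)) ` cball 0 r)"
    by (intro compact_continuous_image continuous_on_resolvent compact_cball) (simp add: assms)
  then have "bounded ((\<lambda>\<mu>. inverse_el (1 - of_complex \<mu> * y)) ` cball 0 r)"
    by (rule compact_imp_bounded)
  then obtain M where "\<forall>z \<in> (\<lambda>\<mu>. inverse_el (1 - of_complex \<mu> * y)) ` cball 0 r. norm z \<le> M"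
    unfolding bounded_iff by blast
  then show ?thesis
    by (intro that) auto
qed

lemma norm_sum_unimodular_squares_le:
  assumes "\<And>j. j < N \<Longrightarrow> norm (R j) \<le> M" and "\<And>j. cmod (z j) = 1"
  shows "norm (\<Sum>j<N. of_complex (z j) * R j * R j) \<le> real N * M\<^sup>2"
proof -
  have "norm (of_complex (z j) * R j * R j) \<le> M\<^sup>2" if "j < N" for j
  proof -
    have "norm (of_complex (z j) * R j * R j) \<le> norm (R j) * norm (R j)"
      using norm_mult_ineq[of "of_complex (z j) * R j" "R j"] assms(2)
      by (simp add: norm_of_complex_mult)
    also have "\<dots> \<le> M * M"
      using assms(1)[OF that] order_trans[OF norm_ge_zero assms(1)[OF that]]
      by (intro mult_mono) auto
    finally show ?thesis by (simp add: power2_eq_square)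
  qed
  then have "norm (\<Sum>j<N. of_complex (z j) * R j * R j) \<le> (\<Sum>j<N. M\<^sup>2)"
    by (intro order_trans[OF norm_sum] sum_mono) simp
  then show ?thesis by simp
qed

lemma norm_power_resolvent_bound:
  fixes y :: 'a
  assumes inv: "\<And>\<mu>. cmod \<mu> \<le> r \<Longrightarrow> invertible_el (1 - of_complex \<mu> * y)"
    and M: "\<And>\<mu>. cmod \<mu> \<le> r \<Longrightarrow> norm (inverse_el (1 - of_complex \<mu> * y)) \<le> M"
    and N: "N > 0" and s: "0 \<le> s" "s \<le> r"
  shows "real N * (s ^ N * norm (y ^ N)) \<le> (r * norm y * M\<^sup>2) * (1 + s ^ N * norm (y ^ N))\<^sup>2"
proof -
  define \<omega> where "\<omega> = cis (2 * pi / real N)"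
  define a where "a = of_complex (complex_of_real s) * y"
  define T where "T = (\<Sum>j<N. of_complex (\<omega> ^ j) * inverse_el (1 - of_complex (\<omega> ^ j) * a)
    * inverse_el (1 - of_complex (\<omega> ^ j) * a))"
  define b where "b = a ^ N"
  have scaled: "of_complex (\<omega> ^ j) * a = of_complex (\<omega> ^ j * complex_of_real s) * y" for j
    unfolding a_def by (simp add: of_complex_mult mult.assoc)
  have cmod_scalar: "cmod (\<omega> ^ j * complex_of_real s) \<le> r" for j
    unfolding \<omega>_def using s by (simp add: norm_mult norm_power)
  have "M \<ge> 0"
    using M[of 0] s by (simp add: order_trans[OF norm_ge_zero])
  have norm_a: "norm a \<le> r * norm y"
    unfolding a_def norm_of_complex_mult using s by (intro mult_right_mono) auto
  have norm_T: "norm T \<le> real N * M\<^sup>2"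
    unfolding T_def scaled using M[OF cmod_scalar]
    by (intro norm_sum_unimodular_squares_le) (simp_all add: \<omega>_def norm_power)
  have "T * (1 - b) * (1 - b) = of_nat (N * N) * a ^ (N - 1)"
    unfolding T_def b_def \<omega>_def
    by (rule resolvent_square_sum[OF N]) (simp add: scaled[unfolded \<omega>_def] inv cmod_scalar[unfolded \<omega>_def])
  moreover have "a * (of_nat (N * N) * a ^ (N - 1)) = of_nat (N * N) * (a * a ^ (N - 1))"
    by (simp only: mult_of_nat_commute[of "N * N" a] flip: mult.assoc)
  moreover have "a * a ^ (N - 1) = b"
    unfolding b_def using N by (cases N) simp_all
  ultimately have "a * (T * (1 - b) * (1 - b)) = of_nat (N * N) * b"
    by simp
  then have "real (N * N) * norm b = norm (a * (T * (1 - b) * (1 - b)))"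
    using norm_of_nat_mult[of "N * N" b] by (simp only:)
  also have "\<dots> \<le> norm a * (norm T * norm (1 - b) * norm (1 - b))"
    by (intro order_trans[OF norm_mult_ineq] mult_left_mono
        order_trans[OF norm_mult_ineq mult_right_mono[OF norm_mult_ineq]] norm_ge_zero)
  also have "\<dots> \<le> (r * norm y) * ((real N * M\<^sup>2) * (1 + norm b) * (1 + norm b))"
    using norm_a norm_T norm_triangle_ineq4[of 1 b] s \<open>M \<ge> 0\<close> by (intro mult_mono) auto
  finally have "real N * (real N * norm b) \<le> real N * ((r * norm y * M\<^sup>2) * (1 + norm b)\<^sup>2)"
    by (simp add: power2_eq_square mult_ac)
  moreover have "norm b = s ^ N * norm (y ^ N)"
    unfolding b_def a_def of_complex_mult_power norm_of_complex_mult using s by (simp add: norm_power)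
  ultimately show ?thesis
    using N by (simp add: mult_le_cancel_left_pos)
qed

lemma invertible_el_one_minus_of_complex_mult_if_cspectrum_le:
  assumes sp: "\<And>l. l \<in> cspectrum sc y \<Longrightarrow> cmod l \<le> t" and small: "cmod \<mu> * t < 1"
  shows "invertible_el (1 - of_complex \<mu> * y)"
proof (cases "\<mu> = 0")
  case False
  have "t < cmod (inverse \<mu>)"
    using small False by (simp add: norm_divide field_simps)
  then have "invertible_el (y - of_complex (inverse \<mu>))"
    using sp[of "inverse \<mu>"] by (auto simp: mem_cspectrum_iff)
  moreover have "1 - of_complex \<mu> * y = of_complex (- \<mu>) * (y - of_complex (inverse \<mu>))"
    using False by (simp add: right_diff_distrib of_complex_minus flip: mult.assoc of_complex_mult)
  ultimately show ?thesis
    using invertible_el_mult(1)[OF invertible_el_of_complex] False by simp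
qed simp

lemma sa_norm_le_if_cspectrum_le:
  assumes sa: "sa y" and t: "t \<ge> 0" and sp: "\<And>l. l \<in> cspectrum sc y \<Longrightarrow> cmod l \<le> t"
  shows "norm y \<le> t"
proof (rule ccontr)
  assume "\<not> norm y \<le> t"
  define r where "r = 2 / (norm y + t)"
  have r: "r > 0" "r * t < 1" "1 < r * norm y"
    unfolding r_def using \<open>\<not> norm y \<le> t\<close> t by (auto simp: field_simps)
  have inv: "invertible_el (1 - of_complex \<mu> * y)" if "cmod \<mu> \<le> r" for \<mu>
  proof (rule invertible_el_one_minus_of_complex_mult_if_cspectrum_le[OF sp])
    show "cmod \<mu> * t < 1"
      using mult_right_mono[OF that t] r(2) by linarith
  qed
  obtain M where M: "\<And>\<mu>. cmod \<mu> \<le> r \<Longrightarrow> norm (inverse_el (1 - of_complex \<mu> * y)) \<le> M"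
    using resolvent_norm_bounded[OF inv] by blast
  define C where "C = r * norm y * M\<^sup>2"
  define k where "k = nat \<lceil>4 * C\<rceil>"
  have four_C: "4 * C < real (2 ^ k :: nat)"
    using less_exp[of k] unfolding k_def by linarith
  have bound: "real N * (s ^ N * norm (y ^ N)) \<le> C * (1 + s ^ N * norm (y ^ N))\<^sup>2"
    if "N > 0" "0 \<le> s" "s \<le> r" for N s
    unfolding C_def by (rule norm_power_resolvent_bound[of r y M, OF inv M that])
  have "r ^ (2 ^ k) * norm (y ^ (2 ^ k)) < 1"
    by (rule power_lt_1_if_quadratic_bound[OF _ r(1) norm_ge_zero four_C bound]) simp_all
  moreover have "1 \<le> r ^ (2 ^ k) * norm (y ^ (2 ^ k))"
    using one_le_power[of "r * norm y" "2 ^ k"] r(3)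
    by (simp add: norm_sa_power_two_power[OF sa] power_mult_distrib)
  ultimately show False by simp
qed

subsection \<open>Positive elements\<close>

abbreviation pos :: "'a \<Rightarrow> bool" where
  "pos x \<equiv> positive_el sc st x"

lemma pos_imp_sa: "pos x \<Longrightarrow> sa x"
  unfolding positive_el_def by simp

lemma mem_cspectrum_of_complex_diff_iff:
  "c - l \<in> cspectrum sc (of_complex c - x) \<longleftrightarrow> l \<in> cspectrum sc x"
proof -
  have "of_complex c - x - of_complex (c - l) = - (x - of_complex l)"
    by (simp add: of_complex_diff)
  then show ?thesis
    unfolding mem_cspectrum_iff by (simp only: invertible_el_minus_iff)
qed

lemma mem_cspectrum_of_real_diff_iff:
  "complex_of_real t - l \<in> cspectrum sc (of_real t - x) \<longleftrightarrow> l \<in> cspectrum sc x"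
  using mem_cspectrum_of_complex_diff_iff[of "complex_of_real t"] by simp

text \<open>Positivity of \<open>x\<close> says that the spectrum of \<open>t - x\<close> lies in \<open>[0, t]\<close>, which
  \<open>sa_norm_le_if_cspectrum_le\<close> turns into a norm condition.\<close>

lemma pos_iff_norm_of_real_diff_le:
  assumes sa: "sa x" and t: "norm x \<le> t"
  shows "pos x \<longleftrightarrow> norm (of_real t - x) \<le> t"
proof
  assume pos: "pos x"
  show "norm (of_real t - x) \<le> t"
  proof (rule sa_norm_le_if_cspectrum_le)
    show "sa (of_real t - x)" using sa by (simp add: sa_of_real_diff)
    show "t \<ge> 0" using t norm_ge_zero order_trans by blast
    fix l assume "l \<in> cspectrum sc (of_real t - x)"
    then have l: "complex_of_real t - l \<in> cspectrum sc x"
      using mem_cspectrum_of_real_diff_iff[of t "complex_of_real t - l" x] by simp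
    then have "Im l = 0" "0 \<le> t - Re l" "cmod (complex_of_real t - l) \<le> t"
      using pos norm_le_if_mem_cspectrum[OF l] t unfolding positive_el_def by auto
    then show "cmod l \<le> t"
      by (auto simp: cmod_eq_Re)
  qed
next
  assume le: "norm (of_real t - x) \<le> t"
  have "Im l = 0 \<and> 0 \<le> Re l" if l: "l \<in> cspectrum sc x" for l
  proof -
    have "Im l = 0" using Im_eq_0_if_mem_cspectrum_sa[OF sa l] .
    moreover have "cmod (complex_of_real t - l) \<le> t"
      using norm_le_if_mem_cspectrum[of "complex_of_real t - l"] le l
      by (meson mem_cspectrum_of_real_diff_iff order_trans)
    ultimately show ?thesis
      by (auto simp: cmod_eq_Re)
  qed
  with sa show "pos x"
    unfolding positive_el_def by blast
qed

lemma pos_0: "pos 0"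
  using pos_iff_norm_of_real_diff_le[of 0 0] sa_0 by simp

lemma pos_add:
  assumes "pos a" and "pos b"
  shows "pos (a + b)"
proof -
  have sa: "sa a" "sa b" using assms by (simp_all add: pos_imp_sa)
  have le: "norm (of_real (norm a) - a) \<le> norm a" "norm (of_real (norm b) - b) \<le> norm b"
    using assms pos_iff_norm_of_real_diff_le[OF sa(1) order_refl]
      pos_iff_norm_of_real_diff_le[OF sa(2) order_refl] by simp_all
  have "of_real (norm a + norm b) - (a + b) = (of_real (norm a) - a) + (of_real (norm b) - b)"
    by (simp add: algebra_simps)
  then have "norm (of_real (norm a + norm b) - (a + b)) \<le> norm a + norm b"
    using order_trans[OF norm_triangle_ineq add_mono[OF le]] by (simp only:)
  then show ?thesis
    using pos_iff_norm_of_real_diff_le[OF sa_add[OF sa] norm_triangle_ineq] by simp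
qed

lemma pos_limit:
  assumes pos: "\<And>n. pos (f n)" and lim: "f \<longlonglongrightarrow> l"
  shows "pos l"
proof -
  have sa: "sa (f n)" for n using pos by (simp add: pos_imp_sa)
  obtain B where B: "\<And>n. norm (f n) \<le> B"
    using convergent_imp_Bseq[OF convergentI[OF lim]] unfolding Bseq_def by auto
  have "norm l \<le> B"
    using tendsto_norm[OF lim] B by (intro LIMSEQ_le_const2) auto
  moreover have "norm (of_real B - l) \<le> B"
  proof (rule LIMSEQ_le_const2)
    show "(\<lambda>n. norm (of_real B - f n)) \<longlonglongrightarrow> norm (of_real B - l)"
      by (intro tendsto_intros lim)
    show "\<exists>N. \<forall>n\<ge>N. norm (of_real B - f n) \<le> B"
      using pos pos_iff_norm_of_real_diff_le[OF sa B] by blast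
  qed
  ultimately show ?thesis
    using pos_iff_norm_of_real_diff_le[OF sa_limit[OF sa lim]] by blast
qed

lemma pos_mult_self: "sa x \<Longrightarrow> pos (x * x)"
  unfolding positive_el_def using sa_mult_self cspectrum_sa_mult_self_nonneg by blast

lemma norm_one_minus_pos_le:
  assumes "pos x" and "norm x \<le> 1"
  shows "norm (1 - x) \<le> 1"
  using pos_iff_norm_of_real_diff_le[OF pos_imp_sa[OF assms(1)] assms(2)] assms(1) by simp

lemma norm_pos_diff_mult_self_le:
  assumes pos: "pos x" and norm: "norm x \<le> 1"
  shows "norm (x - x * x) \<le> 1/4"
proof (rule sa_norm_le_if_cspectrum_le)
  show "sa (x - x * x)"
    using pos_imp_sa[OF pos] by (intro sa_diff sa_mult_self)
  fix l assume l: "l \<in> cspectrum sc (x - x * x)"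
  show "cmod l \<le> 1/4"
  proof (rule ccontr)
    assume big: "\<not> cmod l \<le> 1/4"
    have inv: "invertible_el (x - of_complex \<gamma>)" if \<gamma>: "\<gamma> * (1 - \<gamma>) = l" for \<gamma>
    proof (rule ccontr)
      assume "\<not> invertible_el (x - of_complex \<gamma>)"
      then have "\<gamma> \<in> cspectrum sc x" by (simp add: mem_cspectrum_iff)
      then have "Im \<gamma> = 0" "0 \<le> Re \<gamma>" "Re \<gamma> \<le> 1"
        using pos norm_le_if_mem_cspectrum[of \<gamma> x] norm unfolding positive_el_def
        by (auto simp: cmod_eq_Re)
      moreover have "Re \<gamma> * (1 - Re \<gamma>) \<le> 1/4"
        using zero_le_power2[of "Re \<gamma> - 1/2"] by (simp add: power2_eq_square algebra_simps)
      ultimately have "cmod l \<le> 1/4"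
        unfolding \<gamma>[symmetric] by (simp add: cmod_eq_Re complex_eq_iff)
      with big show False by simp
    qed
    define d where "d = csqrt (1 - 4 * l)"
    have dd: "d * d = 1 - 4 * l"
      unfolding d_def by (simp flip: power2_eq_square)
    have "invertible_el (x * x - of_complex 1 * x + of_complex l)"
      using invertible_el_quadratic[OF inv[of "(1 + d) / 2"] inv[of "(1 - d) / 2"]] dd
      by (simp add: field_simps)
    then have "invertible_el (x - x * x - of_complex l)"
      using invertible_el_minus_iff[of "x - x * x - of_complex l"] by (simp add: algebra_simps)
    with l show False by (simp add: mem_cspectrum_iff)
  qed
qed simp

lemma pos_diff_if_pos_increments:
  assumes inc: "\<And>n. pos (f (Suc n) - f n)" and "m \<le> n"
  shows "pos (f n - f m)"
  using assms(2)
proof (induction n rule: dec_induct)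
  case base
  then show ?case by (simp add: pos_0)
next
  case (step n)
  have "f (Suc n) - f m = (f (Suc n) - f n) + (f n - f m)" by simp
  then show ?case using pos_add[OF inc[of n] step.IH] by simp
qed

lemma is_sa_sup_if_increasing_limit:
  assumes sa: "\<And>n. sa (f n)" and inc: "\<And>n. pos (f (Suc n) - f n)" and lim: "f \<longlonglongrightarrow> l"
  shows "is_sa_sup sc st f l"
proof -
  have sa_l: "sa l" using sa_limit[OF sa lim] .
  have "pos (l - f n)" for n
  proof (rule pos_limit)
    show "(\<lambda>m. f (m + n) - f n) \<longlonglongrightarrow> l - f n"
      by (intro tendsto_diff tendsto_const LIMSEQ_ignore_initial_segment[OF lim])
  qed (rule pos_diff_if_pos_increments[where f = f, OF inc], simp)
  moreover have "pos (u - l)" if "\<forall>n. sa_le sc st (f n) u" for u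
    using that unfolding sa_le_def by (intro pos_limit[OF _ tendsto_diff[OF tendsto_const lim]]) auto
  ultimately show ?thesis
    unfolding is_sa_sup_def sa_le_def using sa sa_l by blast
qed

text \<open>The remainder \<open>c - x c = (1 - x) c\<close> has square \<open>(norm c)\<^sup>2 (1 - x) (x - x\<^sup>2)\<close>,
  and \<open>norm (x - x\<^sup>2) \<le> 1/4\<close>.\<close>

lemma norm_diff_mult_le_half:
  assumes sa: "sa c" and pos: "pos x" and norm_x: "norm x \<le> 1"
    and comm: "x * c = c * x" and square: "c * c = (norm c)\<^sup>2 *\<^sub>R x"
  shows "norm (c - x * c) \<le> norm c / 2"
proof -
  define r where "r = c - x * c"
  have r_eq: "r = (1 - x) * c" and comm': "c * (1 - x) = (1 - x) * c"
    unfolding r_def using comm by (simp_all add: algebra_simps)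
  have "sa r"
    using sa pos_imp_sa[OF pos] comm unfolding r_def self_adjoint_def by (simp add: st_diff st_mult)
  have "r * r = (1 - x) * (1 - x) * (c * c)"
    unfolding r_eq by (simp add: mult.assoc comm' flip: mult.assoc[of c])
  also have "\<dots> = (norm c)\<^sup>2 *\<^sub>R ((1 - x) * (x - x * x))"
    unfolding square by (simp add: algebra_simps)
  finally have "(norm r)\<^sup>2 = (norm c)\<^sup>2 * norm ((1 - x) * (x - x * x))"
    using norm_sa_mult_self[OF \<open>sa r\<close>] by simp
  also have "\<dots> \<le> (norm c)\<^sup>2 * (1 * (1/4))"
    using norm_one_minus_pos_le[OF pos norm_x] norm_pos_diff_mult_self_le[OF pos norm_x]
    by (intro mult_left_mono order_trans[OF norm_mult_ineq] mult_mono) auto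
  also have "\<dots> = (norm c / 2)\<^sup>2"
    by (simp add: power2_eq_square)
  finally show ?thesis
    unfolding r_def by (rule power2_le_imp_le) simp
qed

end

section \<open>Sigma-subspaces closed under squares\<close>

locale cstar_sigma_subspace = cstar +
  fixes V :: "'a set"
  assumes sigma_subspace: "sigma_subspace sc st V"
    and mult_self_mem: "\<And>a. a \<in> V \<Longrightarrow> sa a \<Longrightarrow> a * a \<in> V"
begin

lemma zero_mem: "0 \<in> V"
  using sigma_subspace unfolding sigma_subspace_def by blast

lemma add_mem: "x \<in> V \<Longrightarrow> y \<in> V \<Longrightarrow> x + y \<in> V"
  using sigma_subspace unfolding sigma_subspace_def by blast

lemma of_complex_mult_mem: "x \<in> V \<Longrightarrow> of_complex c * x \<in> V"
  using sigma_subspace unfolding sigma_subspace_def by (simp add: sc_eq_of_complex_mult)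

lemma st_mem: "x \<in> V \<Longrightarrow> st x \<in> V"
  using sigma_subspace unfolding sigma_subspace_def by blast

lemma increasing_sup_mem:
  "(\<And>n. f n \<in> V) \<Longrightarrow> (\<And>n. sa (f n)) \<Longrightarrow> (\<And>n. sa_le sc st (f n) (f (Suc n)))
    \<Longrightarrow> bounded (range f) \<Longrightarrow> is_sa_sup sc st f s \<Longrightarrow> s \<in> V"
  using sigma_subspace unfolding sigma_subspace_def by blast

lemma scaleR_mem: "x \<in> V \<Longrightarrow> r *\<^sub>R x \<in> V"
  using of_complex_mult_mem[of x "complex_of_real r"] by (simp add: scaleR_conv_of_real)

lemma diff_mem: "x \<in> V \<Longrightarrow> y \<in> V \<Longrightarrow> x - y \<in> V"
  using add_mem[of x "(- 1) *\<^sub>R y"] scaleR_mem[of y "- 1"] by simp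

lemma sum_mem: "(\<And>i. i \<in> A \<Longrightarrow> f i \<in> V) \<Longrightarrow> sum f A \<in> V"
  by (induction A rule: infinite_finite_induct) (simp_all add: zero_mem add_mem)

lemma suminf_pos_mem:
  assumes mem: "\<And>n. f n \<in> V" and pos: "\<And>n. pos (f n)" and summable: "summable (\<lambda>n. norm (f n))"
  shows "suminf f \<in> V"
proof (rule increasing_sup_mem)
  have lim: "(\<lambda>n. \<Sum>m<n. f m) \<longlonglongrightarrow> suminf f"
    using summable_LIMSEQ[OF summable_norm_cancel[OF summable]] .
  have sa_partial: "sa (\<Sum>m<n. f m)" for n
    using pos by (intro sa_sum) (simp add: pos_imp_sa)
  show "is_sa_sup sc st (\<lambda>n. \<Sum>m<n. f m) (suminf f)"
    using pos by (intro is_sa_sup_if_increasing_limit[OF sa_partial _ lim]) simp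
  show "sa_le sc st (\<Sum>m<n. f m) (\<Sum>m<Suc n. f m)" for n
    unfolding sa_le_def using sa_partial[of n] sa_partial[of "Suc n"] pos[of n] by simp
  show "bounded (range (\<lambda>n. \<Sum>m<n. f m))"
    using convergent_imp_Bseq[OF convergentI[OF lim]] by (simp add: Bseq_eq_bounded)
  show "(\<Sum>m<n. f m) \<in> V" for n
    using mem by (intro sum_mem)
  show "sa (\<Sum>m<n. f m)" for n
    by (rule sa_partial)
qed

text \<open>Polarization: with \<open>x = (c / norm c)\<^sup>2\<close>, \<open>A = (\<epsilon> / 2) x\<close> and \<open>B = c / (2 \<epsilon>)\<close>, where
  \<open>\<epsilon>\<^sup>2 = norm c\<close>, the squares \<open>(A \<plusminus> B)\<^sup>2\<close> lie in \<open>V\<close> and differ by \<open>2 (A B + B A) = x c\<close>.\<close>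

lemma sa_decomposition:
  assumes "c \<in> V" and "sa c"
  shows "\<exists>p q. p \<in> V \<and> q \<in> V \<and> pos p \<and> pos q \<and> norm p \<le> norm c \<and> norm q \<le> norm c
    \<and> norm (c - (p - q)) \<le> norm c / 2"
proof (cases "c = 0")
  case True
  then show ?thesis using zero_mem pos_0 by auto
next
  case False
  define \<epsilon> where "\<epsilon> = sqrt (norm c)"
  have \<epsilon>: "\<epsilon> > 0" "\<epsilon> * \<epsilon> = norm c"
    using False by (simp_all add: \<epsilon>_def)
  define w where "w = (1 / norm c) *\<^sub>R c"
  define x where "x = w * w"
  have "sa w" "w \<in> V" "norm w = 1"
    using assms False by (simp_all add: w_def sa_scaleR scaleR_mem)
  then have x: "x \<in> V" "pos x" "norm x = 1"
    by (simp_all add: x_def mult_self_mem pos_mult_self norm_sa_mult_self)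
  have comm: "x * c = c * x" and square: "c * c = (norm c)\<^sup>2 *\<^sub>R x"
    using False by (simp_all add: x_def w_def power2_eq_square mult.assoc)
  define A where "A = (\<epsilon> / 2) *\<^sub>R x"
  define B where "B = (1 / (2 * \<epsilon>)) *\<^sub>R c"
  have sa_AB: "sa A" "sa B" and mem_AB: "A \<in> V" "B \<in> V"
    using x assms by (simp_all add: A_def B_def sa_scaleR scaleR_mem pos_imp_sa)
  have "norm A = \<epsilon> / 2" "norm B = \<epsilon> / 2"
    using x \<epsilon> by (simp_all add: A_def B_def field_simps flip: \<epsilon>(2))
  then have "norm (A + B) \<le> \<epsilon>" "norm (A - B) \<le> \<epsilon>"
    using norm_triangle_ineq[of A B] norm_triangle_ineq4[of A B] by simp_all
  then have norm_squares: "norm ((A + B) * (A + B)) \<le> norm c" "norm ((A - B) * (A - B)) \<le> norm c"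
    using \<epsilon> by (metis norm_mult_ineq mult_mono norm_ge_zero order_trans)+
  have "(A + B) * (A + B) - (A - B) * (A - B) = x * c"
    using \<epsilon>(1) comm by (simp add: A_def B_def algebra_simps scaleR_2 flip: scaleR_add_left)
  then have "c - ((A + B) * (A + B) - (A - B) * (A - B)) = c - x * c" by simp
  then show ?thesis
    using norm_diff_mult_le_half[OF assms(2) x(2) _ comm square] x(3) norm_squares
      mult_self_mem[OF add_mem[OF mem_AB] sa_add[OF sa_AB]]
      mult_self_mem[OF diff_mem[OF mem_AB] sa_diff[OF sa_AB]]
      pos_mult_self[OF sa_add[OF sa_AB]] pos_mult_self[OF sa_diff[OF sa_AB]]
    by (metis order_refl)
qed

lemma sa_mem_if_approximable:
  assumes approx: "\<And>k. \<exists>g\<in>V. sa g \<and> norm (g - h) \<le> (1/4) ^ k"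
  shows "h \<in> V"
proof -
  obtain g where g: "\<And>k. g k \<in> V" "\<And>k. sa (g k)" "\<And>k. norm (g k - h) \<le> (1/4) ^ k"
    using approx by metis
  obtain P Q where PQ: "\<And>c. c \<in> V \<Longrightarrow> sa c \<Longrightarrow> P c \<in> V \<and> Q c \<in> V \<and> pos (P c) \<and> pos (Q c)
      \<and> norm (P c) \<le> norm c \<and> norm (Q c) \<le> norm c \<and> norm (c - (P c - Q c)) \<le> norm c / 2"
    using sa_decomposition by metis
  define x where "x = rec_nat (g 0) (\<lambda>M y. y + (P (g (Suc M) - y) - Q (g (Suc M) - y)))"
  define c where "c M = g (Suc M) - x M" for M
  have x_0: "x 0 = g 0" and x_Suc: "x (Suc M) = x M + (P (c M) - Q (c M))" for M
    by (simp_all add: x_def c_def)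
  have "x M \<in> V \<and> sa (x M)" for M
  proof (induction M)
    case (Suc M)
    then have "c M \<in> V" "sa (c M)"
      using g by (simp_all add: c_def diff_mem sa_diff)
    then show ?case
      using PQ[of "c M"] Suc by (simp add: x_Suc add_mem diff_mem sa_add sa_diff pos_imp_sa)
  qed (simp add: x_0 g)
  then have c: "c M \<in> V" "sa (c M)" for M
    using g by (simp_all add: c_def diff_mem sa_diff)
  have "norm (g (Suc M) - x (Suc M)) \<le> norm (g (Suc M) - x M) / 2" for M
    using PQ[OF c] by (simp add: x_Suc c_def algebra_simps)
  note approximation = halving_approximation[where g = g and x = x, OF g(3) x_0 this]
  have geometric: "summable (\<lambda>M. 4 * (3/4::real) ^ M)"
    by simp
  have PQ_le: "norm (P (c M)) \<le> 4 * (3/4) ^ M" "norm (Q (c M)) \<le> 4 * (3/4) ^ M" for M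
    using PQ[OF c(1)[of M] c(2)[of M]] approximation(2)[of M] unfolding c_def
    by (meson order_trans)+
  have summable: "summable (\<lambda>M. norm (P (c M)))" "summable (\<lambda>M. norm (Q (c M)))"
    by (rule summable_comparison_test'[OF geometric], simp add: PQ_le)+
  have "x = (\<lambda>M. g 0 + ((\<Sum>m<M. P (c m)) - (\<Sum>m<M. Q (c m))))"
  proof
    show "x M = g 0 + ((\<Sum>m<M. P (c m)) - (\<Sum>m<M. Q (c m)))" for M
      by (induction M) (simp_all add: x_0 x_Suc)
  qed
  then have "x \<longlonglongrightarrow> g 0 + ((\<Sum>m. P (c m)) - (\<Sum>m. Q (c m)))"
    using summable by (simp add: tendsto_add tendsto_diff summable_LIMSEQ summable_norm_cancel)
  with approximation(1) have "h = g 0 + ((\<Sum>m. P (c m)) - (\<Sum>m. Q (c m)))"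
    by (rule LIMSEQ_unique)
  moreover have "(\<Sum>m. P (c m)) \<in> V" "(\<Sum>m. Q (c m)) \<in> V"
    using PQ[OF c] summable by (auto intro: suminf_pos_mem)
  ultimately show "h \<in> V"
    by (simp add: add_mem diff_mem g)
qed

lemma sa_limit_mem:
  assumes mem: "\<And>n. f n \<in> V" and sa: "\<And>n. sa (f n)" and lim: "f \<longlonglongrightarrow> h"
  shows "h \<in> V"
proof (rule sa_mem_if_approximable)
  fix k :: nat
  obtain n where "norm (f n - h) < (1/4) ^ k"
    using LIMSEQ_D[OF lim, of "(1/4) ^ k"] by auto
  then show "\<exists>g\<in>V. sa g \<and> norm (g - h) \<le> (1/4) ^ k"
    using mem sa by (intro bexI[of _ "f n"]) auto
qed

theorem closed_sigma_subspace: "closed V"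
  unfolding closed_sequential_limits
proof (intro allI impI, elim conjE)
  fix v a
  assume mem: "\<forall>n. v n \<in> V" and lim: "v \<longlonglongrightarrow> a"
  define re where "re z = (1/2) *\<^sub>R (z + st z)" for z
  define im where "im z = of_complex (- \<i> / 2) * (z - st z)" for z
  have "sa (re z)" "sa (im z)" for z
    unfolding re_def im_def self_adjoint_def
    by (simp_all add: st_scaleR st_add add.commute st_of_complex_mult st_diff of_complex_minus
        right_diff_distrib flip: minus_divide_left)
  moreover have "re z \<in> V" "im z \<in> V" if "z \<in> V" for z
    unfolding re_def im_def using that by (simp_all add: scaleR_mem add_mem diff_mem st_mem of_complex_mult_mem)
  moreover have "(\<lambda>n. re (v n)) \<longlonglongrightarrow> re a" "(\<lambda>n. im (v n)) \<longlonglongrightarrow> im a"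
    unfolding re_def im_def by (intro tendsto_intros lim tendsto_st)+
  ultimately have "re a \<in> V" "im a \<in> V"
    using mem by (metis sa_limit_mem)+
  moreover have "a = re a + of_complex \<i> * im a"
  proof -
    have half: "\<i> * (- \<i> / 2) = complex_of_real (1/2)"
      by (simp add: complex_eq_iff)
    have "of_complex \<i> * im a = (1/2) *\<^sub>R (a - st a)"
      unfolding im_def
      by (simp only: scaleR_conv_of_real of_complex_of_real half flip: mult.assoc of_complex_mult)
    moreover have "(1/2) *\<^sub>R (a + st a) + (1/2) *\<^sub>R (a - st a) = a"
      by (simp add: scaleR_add_right scaleR_diff_right flip: scaleR_add_left)
    ultimately show ?thesis
      unfolding re_def by simp
  qed
  ultimately show "a \<in> V"
    by (metis add_mem of_complex_mult_mem)
qed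

end

theorem lemma3p12:
  fixes sc :: "complex \<Rightarrow> 'a::{real_normed_algebra_1,banach} \<Rightarrow> 'a"
    and st :: "'a \<Rightarrow> 'a" and V :: "'a set"
  assumes "cstar_algebra sc st"
    and "sigma_subspace sc st V"
    and "\<And>a. a \<in> V \<Longrightarrow> self_adjoint st a \<Longrightarrow> a * a \<in> V"
  shows "closed V"
proof -
  interpret cstar_sigma_subspace sc st V
    using assms by unfold_locales
  show ?thesis by (rule closed_sigma_subspace)
qed

end
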